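(* In the setting described in the context, suppose $p_i,p_j,p_k,p_l\in S_1$ satisfy $d(p_i,p_k)\ne d(p_j,p_l)$. If $C_2$ is a line, then $|C_{ij}\cap C_{kl}|\le4$.
   Context: A plane algebraic curve is an infinite set $Z_{\mathbb{R}}(f)=\{(a,b)\in\mathbb{R}^2:f(a,b)=0\}$ for a nonzero $f\in\mathbb{R}[x,y]$; its degree is the minimal degree of such $f$; it is irreducible if $f$ can be chosen irreducible over $\mathbb{R}$. Setting: $d\ge1$; $C_1=Z_{\mathbb{R}}(f_1)$ and $C_2=Z_{\mathbb{R}}(f_2)$ are irreducible plane algebraic curves of degree at most $d$ (possibly equal), with $f_1,f_2$ of minimum degree. $S_1=\{p_1,\dots,p_m\}\subset C_1$ and $S_2=\{q_1,\dots,q_n\}\subset C_2$ are sets of distinct points, $p_i=(a_i,b_i)$, satisfying: (1) neither $C_1$ nor $C_2$ is a vertical line; (2) $S_1\cap S_2=\emptyset$; (3) if $C_1$ (resp. $C_2$) is a circle, its center is not in $S_2$ (resp. $S_1$); (4) if $C_1$ (resp. $C_2$) is a circle, every concentric circle contains at most one point of $S_2$ (resp. $S_1$); (5) if $C_1$ (resp. $C_2$) is a line, then for every line $\ell$ parallel to it, the union of $\ell$ and its reflection in $C_1$ (resp. $C_2$) contains at most one point of $S_2$ (resp. $S_1$); (6) if $C_1$ (resp. $C_2$) is a line, every orthogonal line contains at most one point of $S_2$ (resp. $S_1$). For $1\le i,j\le m$, $C_{ij}\subset\mathbb{R}^4$ is the set of $(x,y,x',y')$ with $f_2(x,y)=0$,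 $f_2(x',y')=0$ and $(x-a_i)^2+(y-b_i)^2=(x'-a_j)^2+(y'-b_j)^2$. $d(\cdot,\cdot)$ is Euclidean distance. *)

theory Defs
  imports "HOL-Analysis.Analysis" "HOL-Computational_Algebra.Polynomial"
begin

(* Bivariate real polynomials f(x,y) are represented as  real poly poly :
   the outer variable is y, the coefficients are polynomials in x. *)
definition eval2 :: "real poly poly \<Rightarrow> real \<Rightarrow> real \<Rightarrow> real" where
  "eval2 f x y = poly (poly f [:y:]) x"

definition tdeg :: "real poly poly \<Rightarrow> nat" where
  "tdeg f = (if f = 0 then 0 else Max {i + degree (coeff f i) | i. coeff f i \<noteq> 0})"

definition zero_set :: "real poly poly \<Rightarrow> (real \<times> real) set" where
  "zero_set f = {(a, b). eval2 f a b = 0}"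

definition plane_curve :: "(real \<times> real) set \<Rightarrow> bool" where
  "plane_curve C \<longleftrightarrow> infinite C \<and> (\<exists>f. f \<noteq> 0 \<and> C = zero_set f)"

definition curve_deg :: "(real \<times> real) set \<Rightarrow> nat" where
  "curve_deg C = (LEAST k. \<exists>f. f \<noteq> 0 \<and> zero_set f = C \<and> tdeg f = k)"

definition irreducible_curve :: "(real \<times> real) set \<Rightarrow> bool" where
  "irreducible_curve C \<longleftrightarrow> plane_curve C \<and> (\<exists>f. irreducible f \<and> C = zero_set f)"

definition min_deg_poly :: "real poly poly \<Rightarrow> (real \<times> real) set \<Rightarrow> bool" where
  "min_deg_poly f C \<longleftrightarrow> f \<noteq> 0 \<and> zero_set f = C \<and> tdeg f = curve_deg C"

definition line_set :: "real \<Rightarrow> real \<Rightarrow> real \<Rightarrow> (real \<times> real) set" where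
  "line_set a b c = {(x, y). a * x + b * y + c = 0}"

definition is_line :: "(real \<times> real) set \<Rightarrow> bool" where
  "is_line C \<longleftrightarrow> (\<exists>a b c. (a, b) \<noteq> (0, 0) \<and> C = line_set a b c)"

definition is_vertical_line :: "(real \<times> real) set \<Rightarrow> bool" where
  "is_vertical_line C \<longleftrightarrow> (\<exists>a c. a \<noteq> 0 \<and> C = line_set a 0 c)"

definition is_circle :: "(real \<times> real) set \<Rightarrow> bool" where
  "is_circle C \<longleftrightarrow> (\<exists>z r. r > 0 \<and> C = sphere z r)"

definition reflect_line :: "real \<Rightarrow> real \<Rightarrow> real \<Rightarrow> real \<times> real \<Rightarrow> real \<times> real" where
  "reflect_line a b c p =
     (let t = 2 * (a * fst p + b * snd p + c) / (a\<^sup>2 + b\<^sup>2) in (fst p - t * a, snd p - t * b))"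

definition at_most_one_in :: "(real \<times> real) set \<Rightarrow> (real \<times> real) set \<Rightarrow> bool" where
  "at_most_one_in A S \<longleftrightarrow> (\<forall>u \<in> S \<inter> A. \<forall>v \<in> S \<inter> A. u = v)"

definition circle_conds :: "(real \<times> real) set \<Rightarrow> (real \<times> real) set \<Rightarrow> bool" where
  "circle_conds C S \<longleftrightarrow> (\<forall>z r. r > 0 \<and> C = sphere z r \<longrightarrow>
      z \<notin> S \<and> (\<forall>r'. r' > 0 \<longrightarrow> at_most_one_in (sphere z r') S))"

definition line_conds :: "(real \<times> real) set \<Rightarrow> (real \<times> real) set \<Rightarrow> bool" where
  "line_conds C S \<longleftrightarrow> (\<forall>a b c. (a, b) \<noteq> (0, 0) \<and> C = line_set a b c \<longrightarrow>
      (\<forall>c'. at_most_one_in (line_set a b c' \<union> reflect_line a b c ` line_set a b c') S) \<and>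
      (\<forall>c'. at_most_one_in (line_set b (- a) c') S))"

definition Cset :: "real poly poly \<Rightarrow> real \<times> real \<Rightarrow> real \<times> real
                    \<Rightarrow> (real \<times> real \<times> real \<times> real) set" where
  "Cset f2 u v = {(x, y, x', y'). eval2 f2 x y = 0 \<and> eval2 f2 x' y' = 0 \<and>
      (x - fst u)\<^sup>2 + (y - snd u)\<^sup>2 = (x' - fst v)\<^sup>2 + (y' - snd v)\<^sup>2}"

end

theory Submission
  imports Defs
begin

text \<open>Parametrize the line \<open>a x + b y + c = 0\<close> (\<open>b \<noteq> 0\<close>) by the abscissa \<open>x\<close>. Then \<open>b\<^sup>2\<close>
  times the squared distance to a point \<open>p\<close> is a quadratic in \<open>x\<close> with leading coefficient
  \<open>a\<^sup>2 + b\<^sup>2\<close> and discriminant determined by the distance of \<open>p\<close> from the line. For a pair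
  \<open>(X, X')\<close> in \<open>C\<^sub>i\<^sub>j \<inter> C\<^sub>k\<^sub>l\<close> the difference of the two distance equations is linear; by the
  orthogonal-line condition (6) its coefficient of \<open>x'\<close> (or, after swapping the two copies of the
  line, of \<open>x\<close>) is nonzero, so \<open>x'\<close> is an affine function of \<open>x\<close>. Substituting it, \<open>x\<close> is a root of
  a quadratic, which has at most two roots unless it vanishes identically. In that case the
  substitution is an isometry of the line, so \<open>p\<^sub>i, p\<^sub>j\<close> and likewise \<open>p\<^sub>k, p\<^sub>l\<close> are equidistant from
  the line; the reflection condition (5) then forces \<open>p\<^sub>i = p\<^sub>j\<close> and \<open>p\<^sub>k = p\<^sub>l\<close>, contradicting
  \<open>d(p\<^sub>i,p\<^sub>k) \<noteq> d(p\<^sub>j,p\<^sub>l)\<close>. So there are in fact at most two such pairs.\<close>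

definition sqdist_quad :: "real \<Rightarrow> real \<Rightarrow> real \<Rightarrow> real \<Rightarrow> real" where
  "sqdist_quad N A K x = N * x\<^sup>2 - 2 * A * x + K"

lemma sqdist_quad_diff:
  "sqdist_quad N A K x - sqdist_quad N A' K' x = 2 * (A' - A) * x + (K - K')"
  unfolding sqdist_quad_def by (simp add: algebra_simps)

lemma sqdist_quad_affine_eq_discriminant:
  fixes N A K A' K' lam mu :: real
  assumes N: "N \<noteq> 0"
    and eq: "\<forall>x. sqdist_quad N A K x = sqdist_quad N A' K' (lam * x + mu)"
  shows "N * K - A\<^sup>2 = N * K' - A'\<^sup>2"
proof -
  have e0: "K = N * mu\<^sup>2 - 2 * A' * mu + K'"
    using eq[rule_format, of 0] by (simp add: sqdist_quad_def)
  have e1: "N - 2 * A + K = N * (lam + mu)\<^sup>2 - 2 * A' * (lam + mu) + K'"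
    using eq[rule_format, of 1] by (simp add: sqdist_quad_def)
  have e2: "N + 2 * A + K = N * (mu - lam)\<^sup>2 - 2 * A' * (mu - lam) + K'"
    using eq[rule_format, of "-1"] by (simp add: sqdist_quad_def algebra_simps)
  \<comment> \<open>the second difference at \<open>-1, 0, 1\<close> compares the leading coefficients\<close>
  have "2 * N + 2 * K = N * ((lam + mu)\<^sup>2 + (mu - lam)\<^sup>2) - 4 * A' * mu + 2 * K'"
    using e1 e2 by (simp add: algebra_simps)
  also have "\<dots> = 2 * N * lam\<^sup>2 + 2 * K"
    unfolding e0 by (simp add: algebra_simps power2_eq_square)
  finally have lam: "lam\<^sup>2 = 1"
    using N by simp
  have "4 * A = 4 * (lam * (A' - N * mu))"
    using e1 e2 by (simp add: algebra_simps power2_eq_square)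
  then have "A\<^sup>2 = (A' - N * mu)\<^sup>2"
    using lam by (simp add: power_mult_distrib)
  then show ?thesis
    unfolding e0 by (simp add: algebra_simps power2_eq_square)
qed

lemma sqdist_quad_affine_eq_roots:
  fixes N A K A' K' lam mu :: real
  defines "R \<equiv> {x. sqdist_quad N A K x = sqdist_quad N A' K' (lam * x + mu)}"
  assumes "\<not> (\<forall>x. sqdist_quad N A K x = sqdist_quad N A' K' (lam * x + mu))"
  shows "finite R \<and> card R \<le> 2"
proof -
  define Q where "Q = [:K - N * mu\<^sup>2 + 2 * A' * mu - K',
                       2 * A' * lam - 2 * A - 2 * N * lam * mu, N * (1 - lam\<^sup>2):]"
  have Q: "poly Q x = sqdist_quad N A K x - sqdist_quad N A' K' (lam * x + mu)" for x
    unfolding Q_def sqdist_quad_def by (simp add: algebra_simps power2_eq_square)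
  have R: "R = {x. poly Q x = 0}"
    unfolding R_def Q by simp
  have "Q \<noteq> 0"
    using assms(2) Q by (metis eq_iff_diff_eq_0 poly_0)
  moreover have "degree Q \<le> 2"
    unfolding Q_def by simp
  ultimately show ?thesis
    unfolding R using poly_roots_finite card_poly_roots_bound le_trans by blast
qed

lemma sqdist_quad_pair_affine:
  fixes N :: real and A K :: "'a \<Rightarrow> real"
  defines "q p \<equiv> sqdist_quad N (A p) (K p)"
  assumes "A v \<noteq> A z"
  obtains lam mu where
    "\<And>x x'. q u x = q v x' \<Longrightarrow> q w x = q z x' \<Longrightarrow> x' = lam * x + mu"
    "\<forall>x. q u x = q v (lam * x + mu) \<Longrightarrow> \<forall>x. q w x = q z (lam * x + mu)"
proof -
  have q_diff: "q p t - q p' t = 2 * (A p' - A p) * t + (K p - K p')" for p p' t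
    unfolding q_def by (rule sqdist_quad_diff)
  define D where "D = A z - A v"
  have D: "D \<noteq> 0"
    using assms(2) unfolding D_def by simp
  define lam where "lam = (A w - A u) / D"
  define mu where "mu = ((K u - K w) - (K v - K z)) / (2 * D)"
  have lin: "q u x - q w x = q v (lam * x + mu) - q z (lam * x + mu)" for x
  proof -
    have "lam * D = A w - A u" "2 * mu * D = (K u - K w) - (K v - K z)"
      unfolding lam_def mu_def using D by simp_all
    moreover have "q v (lam * x + mu) - q z (lam * x + mu) = 2 * (lam * D) * x + 2 * mu * D + (K v - K z)"
      unfolding q_diff D_def by (simp add: algebra_simps)
    ultimately show ?thesis
      unfolding q_diff by simp
  qed
  show thesis
  proof
    fix x x' assume "q u x = q v x'" "q w x = q z x'"
    then have "q v x' - q z x' = q v (lam * x + mu) - q z (lam * x + mu)"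
      using lin[of x] by simp
    then have "D * x' = D * (lam * x + mu)"
      unfolding q_diff D_def by (simp add: algebra_simps)
    then show "x' = lam * x + mu"
      using D by simp
  next
    assume "\<forall>x. q u x = q v (lam * x + mu)"
    then show "\<forall>x. q w x = q z (lam * x + mu)"
      using lin by (simp add: algebra_simps)
  qed
qed

definition line_offset :: "real \<Rightarrow> real \<Rightarrow> real \<Rightarrow> real \<times> real \<Rightarrow> real" where
  "line_offset a b c p = a * fst p + b * snd p + c"

text \<open>\<open>foot_coord a b c p\<close> is \<open>a\<^sup>2 + b\<^sup>2\<close> times the abscissa of the foot of the perpendicular
  from \<open>p\<close> to the line.\<close>

definition foot_coord :: "real \<Rightarrow> real \<Rightarrow> real \<Rightarrow> real \<times> real \<Rightarrow> real" where
  "foot_coord a b c p = b\<^sup>2 * fst p - a * (c + b * snd p)"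

definition sqdist_const :: "real \<Rightarrow> real \<Rightarrow> real \<Rightarrow> real \<times> real \<Rightarrow> real" where
  "sqdist_const a b c p = b\<^sup>2 * (fst p)\<^sup>2 + (c + b * snd p)\<^sup>2"

lemma line_sqdist_eq_sqdist_quad:
  assumes "a * x + b * y + c = 0"
  shows "b\<^sup>2 * ((x - fst p)\<^sup>2 + (y - snd p)\<^sup>2)
           = sqdist_quad (a\<^sup>2 + b\<^sup>2) (foot_coord a b c p) (sqdist_const a b c p) x"
proof -
  have "b * (y - snd p) = - (a * x + c + b * snd p)"
    using assms by (simp add: algebra_simps)
  then have "b\<^sup>2 * (y - snd p)\<^sup>2 = (a * x + c + b * snd p)\<^sup>2"
    by (metis power_mult_distrib power2_minus)
  then show ?thesis
    unfolding sqdist_quad_def foot_coord_def sqdist_const_def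
    by (simp add: algebra_simps power2_eq_square)
qed

lemma sqdist_discriminant:
  "(a\<^sup>2 + b\<^sup>2) * sqdist_const a b c p - (foot_coord a b c p)\<^sup>2 = b\<^sup>2 * (line_offset a b c p)\<^sup>2"
  unfolding foot_coord_def sqdist_const_def line_offset_def
  by (simp add: algebra_simps power2_eq_square)

definition equidist_pairs :: "real \<Rightarrow> real \<Rightarrow> real \<Rightarrow> real \<times> real \<Rightarrow> real \<times> real
    \<Rightarrow> real \<times> real \<Rightarrow> real \<times> real \<Rightarrow> (real \<times> real \<times> real \<times> real) set" where
  "equidist_pairs a b c u v w z = {(x, y, x', y'). a * x + b * y + c = 0 \<and> a * x' + b * y' + c = 0 \<and>
     (x - fst u)\<^sup>2 + (y - snd u)\<^sup>2 = (x' - fst v)\<^sup>2 + (y' - snd v)\<^sup>2 \<and>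
     (x - fst w)\<^sup>2 + (y - snd w)\<^sup>2 = (x' - fst z)\<^sup>2 + (y' - snd z)\<^sup>2}"

lemma equidist_pairs_swap:
  "equidist_pairs a b c u v w z = (\<lambda>(x, y, x', y'). (x', y', x, y)) ` equidist_pairs a b c v u z w"
  unfolding equidist_pairs_def by (auto simp: image_iff)

lemma equidist_pairs_card_le_2_if_foot_coord_ne:
  fixes a b c :: real and u v w z :: "real \<times> real"
  assumes b: "b \<noteq> 0"
    and foot: "foot_coord a b c v \<noteq> foot_coord a b c z"
    and offsets: "(line_offset a b c u)\<^sup>2 \<noteq> (line_offset a b c v)\<^sup>2 \<or>
                  (line_offset a b c w)\<^sup>2 \<noteq> (line_offset a b c z)\<^sup>2"
  shows "finite (equidist_pairs a b c u v w z) \<and> card (equidist_pairs a b c u v w z) \<le> 2"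
proof -
  define N where "N = a\<^sup>2 + b\<^sup>2"
  define q where "q p = sqdist_quad N (foot_coord a b c p) (sqdist_const a b c p)" for p
  let ?S = "equidist_pairs a b c u v w z"
  have N: "N \<noteq> 0"
    using b unfolding N_def by (simp add: add_nonneg_eq_0_iff)
  obtain lam mu where affine: "\<And>x x'. q u x = q v x' \<Longrightarrow> q w x = q z x' \<Longrightarrow> x' = lam * x + mu"
    and transfer: "\<forall>x. q u x = q v (lam * x + mu) \<Longrightarrow> \<forall>x. q w x = q z (lam * x + mu)"
    using foot by (rule sqdist_quad_pair_affine[where A = "foot_coord a b c" and K = "sqdist_const a b c"
                                                   and N = N and u = u and w = w, folded q_def]) blast
  have graph: "x' = lam * x + mu \<and> q u x = q v x'" if "(x, y, x', y') \<in> ?S" for x y x' y'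
  proof -
    have on_line: "a * x + b * y + c = 0" "a * x' + b * y' + c = 0"
      and "(x - fst u)\<^sup>2 + (y - snd u)\<^sup>2 = (x' - fst v)\<^sup>2 + (y' - snd v)\<^sup>2"
      and "(x - fst w)\<^sup>2 + (y - snd w)\<^sup>2 = (x' - fst z)\<^sup>2 + (y' - snd z)\<^sup>2"
      using that unfolding equidist_pairs_def by auto
    then have "q u x = q v x'" "q w x = q z x'"
      unfolding q_def N_def
        line_sqdist_eq_sqdist_quad[OF on_line(1), symmetric]
        line_sqdist_eq_sqdist_quad[OF on_line(2), symmetric]
      by simp_all
    then show ?thesis
      using affine by blast
  qed
  have not_identical: "\<not> (\<forall>x. q u x = q v (lam * x + mu))"
  proof
    assume uv: "\<forall>x. q u x = q v (lam * x + mu)"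
    have "b\<^sup>2 * (line_offset a b c p)\<^sup>2 = b\<^sup>2 * (line_offset a b c p')\<^sup>2"
      if "\<forall>x. q p x = q p' (lam * x + mu)" for p p'
      using sqdist_quad_affine_eq_discriminant[OF N that[unfolded q_def]]
      unfolding N_def sqdist_discriminant .
    then show False
      using uv transfer[OF uv] offsets b by simp
  qed
  have S_elem: "s = (fst s, - (a * fst s + c) / b, lam * fst s + mu, - (a * (lam * fst s + mu) + c) / b)"
    if "s \<in> ?S" for s
  proof -
    obtain x y x' y' where s: "s = (x, y, x', y')"
      by (cases s) auto
    have "a * x + b * y + c = 0" "a * x' + b * y' + c = 0" "x' = lam * x + mu"
      using that graph unfolding s equidist_pairs_def by auto
    then show ?thesis
      unfolding s using b by (simp add: field_simps)
  qed
  let ?R = "{x. q u x = q v (lam * x + mu)}"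
  have inj: "inj_on fst ?S"
    by (rule inj_onI) (metis S_elem)
  have sub: "fst ` ?S \<subseteq> ?R"
    using graph by force
  have R: "finite ?R \<and> card ?R \<le> 2"
    using sqdist_quad_affine_eq_roots not_identical unfolding q_def by blast
  then have "finite ?S"
    using finite_imageD[OF finite_subset[OF sub] inj] by blast
  moreover have "card ?S \<le> 2"
    using card_image[OF inj] card_mono[OF _ sub] R by fastforce
  ultimately show ?thesis ..
qed

lemma equidist_pairs_card_le_2:
  fixes a b c :: real and P :: "(real \<times> real) set"
  assumes b: "b \<noteq> 0"
    and foot_inj: "inj_on (foot_coord a b c) P"
    and offset_inj: "inj_on (\<lambda>p. (line_offset a b c p)\<^sup>2) P"
    and P: "u \<in> P" "v \<in> P" "w \<in> P" "z \<in> P"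
    and dist: "dist u w \<noteq> dist v z"
  shows "finite (equidist_pairs a b c u v w z) \<and> card (equidist_pairs a b c u v w z) \<le> 2"
proof -
  have offsets: "(line_offset a b c u)\<^sup>2 \<noteq> (line_offset a b c v)\<^sup>2 \<or>
                 (line_offset a b c w)\<^sup>2 \<noteq> (line_offset a b c z)\<^sup>2"
  proof (rule ccontr)
    assume "\<not> ?thesis"
    then have "u = v" "w = z"
      using inj_onD[OF offset_inj] P by auto
    then show False
      using dist by simp
  qed
  show ?thesis
  proof (cases "foot_coord a b c v = foot_coord a b c z")
    case False
    then show ?thesis
      using equidist_pairs_card_le_2_if_foot_coord_ne b offsets by blast
  next
    case True
    then have "v = z"
      using inj_onD[OF foot_inj] P by blast
    then have "foot_coord a b c u \<noteq> foot_coord a b c w"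
      using dist inj_onD[OF foot_inj _ P(1) P(3)] by auto
    moreover have "(line_offset a b c v)\<^sup>2 \<noteq> (line_offset a b c u)\<^sup>2 \<or>
                   (line_offset a b c z)\<^sup>2 \<noteq> (line_offset a b c w)\<^sup>2"
      using offsets by auto
    ultimately have "finite (equidist_pairs a b c v u z w) \<and> card (equidist_pairs a b c v u z w) \<le> 2"
      by (rule equidist_pairs_card_le_2_if_foot_coord_ne[OF b])
    then show ?thesis
      unfolding equidist_pairs_swap[of a b c u v w z] using card_image_le le_trans by blast
  qed
qed

lemma line_offset_reflect_line:
  assumes "(a, b) \<noteq> (0, 0)"
  shows "line_offset a b c (reflect_line a b c p) = - line_offset a b c p"
proof -
  define e where "e = line_offset a b c p"
  define t where "t = 2 * e / (a\<^sup>2 + b\<^sup>2)"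
  have "t * (a\<^sup>2 + b\<^sup>2) = 2 * e"
    using assms unfolding t_def by (simp add: add_nonneg_eq_0_iff)
  moreover have "reflect_line a b c p = (fst p - t * a, snd p - t * b)"
    unfolding reflect_line_def t_def e_def line_offset_def by simp
  ultimately show ?thesis
    unfolding line_offset_def e_def by (simp add: algebra_simps power2_eq_square)
qed

lemma reflect_line_involution:
  assumes "(a, b) \<noteq> (0, 0)"
  shows "reflect_line a b c (reflect_line a b c p) = p"
proof -
  have "line_offset a b c (reflect_line a b c p) = - line_offset a b c p"
    by (rule line_offset_reflect_line[OF assms])
  then show ?thesis
    unfolding reflect_line_def Let_def line_offset_def[symmetric] by simp
qed

lemma line_conds_inj_on_foot_coord:
  assumes "line_conds (line_set a b c) P" "b \<noteq> 0"
  shows "inj_on (foot_coord a b c) P"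
proof (rule inj_onI)
  fix p1 p2 assume P: "p1 \<in> P" "p2 \<in> P" and "foot_coord a b c p1 = foot_coord a b c p2"
  then have "b * (b * fst p1 - a * snd p1) = b * (b * fst p2 - a * snd p2)"
    unfolding foot_coord_def by (simp add: algebra_simps power2_eq_square)
  then have "p2 \<in> line_set b (- a) (a * snd p1 - b * fst p1)"
    using assms(2) unfolding line_set_def by (auto simp: case_prod_beta)
  moreover have "p1 \<in> line_set b (- a) (a * snd p1 - b * fst p1)"
    unfolding line_set_def by (auto simp: case_prod_beta)
  moreover have "at_most_one_in (line_set b (- a) (a * snd p1 - b * fst p1)) P"
    using assms(1)[unfolded line_conds_def, rule_format, of a b c] assms(2) by simp
  ultimately show "p1 = p2"
    using P unfolding at_most_one_in_def by blast
qed

lemma line_conds_inj_on_line_offset_sq: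
  assumes "line_conds (line_set a b c) P" "(a, b) \<noteq> (0, 0)"
  shows "inj_on (\<lambda>p. (line_offset a b c p)\<^sup>2) P"
proof (rule inj_onI)
  fix p1 p2 assume P: "p1 \<in> P" "p2 \<in> P"
    and "(line_offset a b c p1)\<^sup>2 = (line_offset a b c p2)\<^sup>2"
  define c' where "c' = c - line_offset a b c p1"
  let ?L = "line_set a b c' \<union> reflect_line a b c ` line_set a b c'"
  have on_line: "p \<in> line_set a b c' \<longleftrightarrow> line_offset a b c p = line_offset a b c p1" for p
    unfolding line_set_def c'_def line_offset_def by (auto simp: case_prod_beta)
  have "line_offset a b c p2 = line_offset a b c p1 \<or> line_offset a b c p2 = - line_offset a b c p1"
    using \<open>(line_offset a b c p1)\<^sup>2 = _\<close> by (metis power2_eq_iff)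
  then have "p2 \<in> ?L"
  proof
    assume "line_offset a b c p2 = - line_offset a b c p1"
    then have "reflect_line a b c p2 \<in> line_set a b c'"
      unfolding on_line line_offset_reflect_line[OF assms(2)] by simp
    then show ?thesis
      using reflect_line_involution[OF assms(2)] by (metis UnI2 imageI)
  qed (simp add: on_line)
  moreover have "p1 \<in> ?L"
    by (simp add: on_line)
  moreover have "at_most_one_in ?L P"
    using assms(1)[unfolded line_conds_def, rule_format, of a b c] assms(2) by simp
  ultimately show "p1 = p2"
    using P unfolding at_most_one_in_def by blast
qed

theorem lemma4p4:
  fixes d m n :: nat
    and C1 C2 :: "(real \<times> real) set"
    and f1 f2 :: "real poly poly"
    and p q :: "nat \<Rightarrow> real \<times> real"
    and i j k l :: nat
  assumes "d \<ge> 1"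
    and "irreducible_curve C1" "irreducible_curve C2"
    and "curve_deg C1 \<le> d" "curve_deg C2 \<le> d"
    and "min_deg_poly f1 C1" "min_deg_poly f2 C2"
    and "inj_on p {1..m}" "inj_on q {1..n}"
    and "p ` {1..m} \<subseteq> C1" "q ` {1..n} \<subseteq> C2"
    and "\<not> is_vertical_line C1" "\<not> is_vertical_line C2"
    and "p ` {1..m} \<inter> q ` {1..n} = {}"
    and "circle_conds C1 (q ` {1..n})" "circle_conds C2 (p ` {1..m})"
    and "line_conds C1 (q ` {1..n})" "line_conds C2 (p ` {1..m})"
    and "i \<in> {1..m}" "j \<in> {1..m}" "k \<in> {1..m}" "l \<in> {1..m}"
    and "dist (p i) (p k) \<noteq> dist (p j) (p l)"
    and "is_line C2"
  shows "finite (Cset f2 (p i) (p j) \<inter> Cset f2 (p k) (p l)) \<and>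
         card (Cset f2 (p i) (p j) \<inter> Cset f2 (p k) (p l)) \<le> 4"
proof -
  obtain a b c where ab: "(a, b) \<noteq> (0, 0)" and C2: "C2 = line_set a b c"
    using \<open>is_line C2\<close> unfolding is_line_def by blast
  have b: "b \<noteq> 0"
  proof
    assume "b = 0"
    then have "is_vertical_line C2"
      using ab unfolding is_vertical_line_def C2 by auto
    with \<open>\<not> is_vertical_line C2\<close> show False ..
  qed
  have zero_set: "zero_set f2 = line_set a b c"
    using \<open>min_deg_poly f2 C2\<close> unfolding min_deg_poly_def C2 by simp
  have "eval2 f2 x y = 0 \<longleftrightarrow> (x, y) \<in> zero_set f2" for x y
    by (simp add: zero_set_def)
  then have "eval2 f2 x y = 0 \<longleftrightarrow> a * x + b * y + c = 0" for x y
    unfolding zero_set by (simp add: line_set_def)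
  then have "Cset f2 u v \<inter> Cset f2 w z = equidist_pairs a b c u v w z" for u v w z
    unfolding Cset_def equidist_pairs_def by auto
  moreover have "line_conds (line_set a b c) (p ` {1..m})"
    using \<open>line_conds C2 (p ` {1..m})\<close> unfolding C2 .
  then have "finite (equidist_pairs a b c (p i) (p j) (p k) (p l)) \<and>
             card (equidist_pairs a b c (p i) (p j) (p k) (p l)) \<le> 2"
    using equidist_pairs_card_le_2[OF b line_conds_inj_on_foot_coord[OF _ b]
        line_conds_inj_on_line_offset_sq[OF _ ab]] assms(19-23) by simp
  ultimately show ?thesis
    by simp
qed

end
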